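(* Let $q=2^m$ with $m\ge2$, and let $G=q^2{:}\mathrm{SL}_2(q)$ be the primitive affine group $N\rtimes H$, where $N=\mathbb F_q^2$ acts regularly on itself by translation and $H=\mathrm{SL}_2(q)$ acts naturally on $\mathbb F_q^2$ (degree $q^2$). Then $\kappa(G)\ge3$.
   Context: A derangement is an element fixing no point; $\kappa(G)$ is the number of conjugacy classes of $G$ consisting of derangements. *)

theory Defs
  imports Main
begin

text \<open>The affine map v \<mapsto> A v + w on the plane F^2, where A = (a,b;c,d) and w = (w1,w2).
  Permutations of F^2 are represented as functions, group product = composition.\<close>
definition affine_map :: "'a::field \<Rightarrow> 'a \<Rightarrow> 'a \<Rightarrow> 'a \<Rightarrow> 'a \<Rightarrow> 'a \<Rightarrow> ('a \<times> 'a \<Rightarrow> 'a \<times> 'a)" where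
  "affine_map a b c d w1 w2 = (\<lambda>(x, y). (a * x + b * y + w1, c * x + d * y + w2))"

definition ASL2 :: "('a::field \<times> 'a \<Rightarrow> 'a \<times> 'a) set" where
  "ASL2 = {affine_map a b c d w1 w2 | a b c d w1 w2. a * d - b * c = 1}"

definition derangement :: "('b \<Rightarrow> 'b) \<Rightarrow> bool" where
  "derangement g \<longleftrightarrow> (\<forall>v. g v \<noteq> v)"

definition conj_class :: "('b \<Rightarrow> 'b) set \<Rightarrow> ('b \<Rightarrow> 'b) \<Rightarrow> ('b \<Rightarrow> 'b) set" where
  "conj_class G g = {h \<circ> g \<circ> inv h | h. h \<in> G}"

definition conj_classes :: "('b \<Rightarrow> 'b) set \<Rightarrow> ('b \<Rightarrow> 'b) set set" where
  "conj_classes G = {conj_class G g | g. g \<in> G}"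

definition kappa :: "('b \<Rightarrow> 'b) set \<Rightarrow> nat" where
  "kappa G = card {C \<in> conj_classes G. \<forall>g\<in>C. derangement g}"

end

theory Submission
  imports Defs
begin

text \<open>
  Over a field of characteristic 2 consider, for c \<noteq> 0, the affine maps
  t c : (x, y) \<mapsto> (x + y, y + c), i.e. the unipotent matrix (1,1;0,1) followed by the
  translation by (0, c).  Each t c is a derangement, since its second coordinate moves
  by c, and conjugation by a bijection preserves fixed-point-freeness, so the whole
  conjugacy class of t c in ASL2 consists of derangements.  Comparing coefficients in
  h \<circ> t d = t c \<circ> h for h \<in> ASL2 shows that the linear part of h is (a,b;0,a) with
  a^2 = 1, hence a = 1 in characteristic 2, and then c = d.  So the classes of the t c
  are pairwise distinct, which gives kappa ASL2 \<ge> q - 1.  Finally a field of order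
  q = 2^m has characteristic 2, and q - 1 \<ge> 3 for m \<ge> 2.
\<close>

text \<open>A finite field whose order is a power of 2 has characteristic 2: translating by 1
  permutes the field, so summing over all elements gives q \<cdot> 1 = 0.\<close>
lemma char_two_of_card_power_of_two:
  fixes m :: nat
  assumes card: "card (UNIV :: 'a::{finite,field} set) = 2 ^ m" and "m \<ge> 1"
  shows "(1::'a) + 1 = 0"
proof -
  have shift_bij: "bij (\<lambda>x::'a. x + 1)"
    by (rule bijI') (auto intro: exI[of _ "_ - 1"])
  have "(\<Sum>x\<in>UNIV. x) + of_nat (card (UNIV::'a set)) = (\<Sum>x\<in>UNIV. x + (1::'a))"
    by (simp add: sum.distrib)
  also have "\<dots> = (\<Sum>x\<in>UNIV. x)"
    using sum.reindex_bij_betw[OF shift_bij, of "\<lambda>x. x"] by simp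
  finally have "(2::'a) ^ m = 0"
    using card by simp
  then show ?thesis
    by simp
qed

text \<open>Every element of ASL2 is a bijection of the plane; the inverse of v \<mapsto> A v + w
  is v \<mapsto> adj(A) (v - w), because det A = 1.\<close>
lemma affine_map_bij:
  fixes a b c d w1 w2 :: "'a::field"
  assumes det: "a * d - b * c = 1"
  shows "bij (affine_map a b c d w1 w2)"
proof -
  let ?h = "affine_map a b c d w1 w2"
  let ?k = "\<lambda>(x::'a, y::'a). (d * (x - w1) - b * (y - w2), a * (y - w2) - c * (x - w1))"
  have "?k (?h v) = v" for v
  proof -
    have "d * (a * x + b * y) - b * (c * x + d * y) = (a * d - b * c) * x"
      and "a * (c * x + d * y) - c * (a * x + b * y) = (a * d - b * c) * y" for x y :: 'a
      by (simp_all add: algebra_simps)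
    then show ?thesis
      using det by (cases v) (simp add: affine_map_def)
  qed
  moreover have "?h (?k v) = v" for v
  proof -
    obtain x y where v: "v = (x, y)"
      by (cases v)
    have "a * (d * (x - w1) - b * (y - w2)) + b * (a * (y - w2) - c * (x - w1))
          = (a * d - b * c) * (x - w1)"
      and "c * (d * (x - w1) - b * (y - w2)) + d * (a * (y - w2) - c * (x - w1))
          = (a * d - b * c) * (y - w2)"
      by (simp_all add: algebra_simps)
    then show ?thesis
      using det by (simp add: v affine_map_def)
  qed
  ultimately show ?thesis
    by (intro o_bij[of ?k]) (simp_all add: fun_eq_iff)
qed

lemma ASL2_bij: "h \<in> ASL2 \<Longrightarrow> bij h"
  unfolding ASL2_def using affine_map_bij by blast

lemma id_in_ASL2: "id \<in> ASL2"
proof -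
  have "id = affine_map (1::'a) 0 0 1 0 0"
    by (auto simp: affine_map_def)
  then show ?thesis
    unfolding ASL2_def by force
qed

lemma conj_class_intertwiner:
  assumes "f \<in> conj_class G g" and "\<And>h. h \<in> G \<Longrightarrow> bij h"
  obtains h where "h \<in> G" and "bij h" and "f \<circ> h = h \<circ> g"
proof -
  obtain h where h: "h \<in> G" "f = h \<circ> g \<circ> inv h"
    using assms(1) unfolding conj_class_def by auto
  with assms(2) have "bij h" by blast
  then have "f \<circ> h = h \<circ> g"
    unfolding h(2) by (simp add: fun_eq_iff bij_is_inj)
  with h(1) \<open>bij h\<close> show thesis by (rule that)
qed

text \<open>Conjugation by a bijection preserves being a derangement: a fixed point v of
  h \<circ> g \<circ> inv h gives the fixed point inv h v of g.\<close>
lemma derangement_conj_class: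
  assumes "derangement g" and "f \<in> conj_class G g" and "\<And>h. h \<in> G \<Longrightarrow> bij h"
  shows "derangement f"
proof -
  obtain h where "bij h" and intertwine: "f \<circ> h = h \<circ> g"
    using conj_class_intertwiner[OF assms(2,3)] by blast
  show ?thesis
    unfolding derangement_def
  proof
    fix v
    obtain u where v: "v = h u"
      using \<open>bij h\<close> by (meson bij_pointE)
    have "f v = h (g u)"
      using intertwine unfolding v by (metis comp_apply)
    also have "\<dots> \<noteq> h u"
      using assms(1) \<open>bij h\<close> by (simp add: derangement_def bij_is_inj inj_eq)
    finally show "f v \<noteq> v"
      unfolding v .
  qed
qed

lemma card_le_kappa:
  fixes G :: "('b::finite \<Rightarrow> 'b) set"
  assumes inj: "inj_on (\<lambda>c. conj_class G (f c)) S"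
    and mem: "\<And>c. c \<in> S \<Longrightarrow> f c \<in> G"
    and der: "\<And>c g. c \<in> S \<Longrightarrow> g \<in> conj_class G (f c) \<Longrightarrow> derangement g"
  shows "card S \<le> kappa G"
proof -
  have "(\<lambda>c. conj_class G (f c)) ` S \<subseteq> {C \<in> conj_classes G. \<forall>g\<in>C. derangement g}"
    using mem der unfolding conj_classes_def by blast
  then have "card ((\<lambda>c. conj_class G (f c)) ` S) \<le> kappa G"
    unfolding kappa_def by (intro card_mono) simp_all
  then show ?thesis
    using card_image[OF inj] by simp
qed

definition shear_shift :: "'a::field \<Rightarrow> ('a \<times> 'a \<Rightarrow> 'a \<times> 'a)" where
  "shear_shift c = affine_map 1 1 0 1 0 c"

lemma shear_shift_in_ASL2: "shear_shift c \<in> ASL2"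
  unfolding shear_shift_def ASL2_def by force

lemma shear_shift_derangement: "c \<noteq> 0 \<Longrightarrow> derangement (shear_shift c)"
  unfolding shear_shift_def derangement_def affine_map_def by auto

text \<open>Evaluating h \<circ> t d = t c \<circ> h at (0,0), (1,0), (0,1) forces the linear part of h to be
  (a,b;0,a) with a^2 = 1, so (a + 1)^2 = 0, a = 1, and then d = c.\<close>
lemma shear_shift_conj_eq:
  fixes c d :: "'a::field"
  assumes char2: "(1::'a) + 1 = 0"
    and conj: "shear_shift c \<in> conj_class ASL2 (shear_shift d)"
  shows "c = d"
proof -
  obtain h where "h \<in> ASL2" and intertwine: "shear_shift c \<circ> h = h \<circ> shear_shift d"
    using conj_class_intertwiner[OF conj ASL2_bij] by blast
  then obtain a b c' d' w1 w2 where h: "h = affine_map a b c' d' w1 w2"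
    and det: "a * d' - b * c' = 1"
    unfolding ASL2_def by auto
  have at: "shear_shift c (h v) = h (shear_shift d v)" for v
    using intertwine by (metis comp_apply)
  have at00: "w1 + w2 = b * d + w1" "w2 + c = d' * d + w2"
    using at[of "(0, 0)"] by (auto simp: h shear_shift_def affine_map_def)
  have at10: "a + w1 + c' + w2 = a + b * d + w1"
    using at[of "(1, 0)"] by (auto simp: h shear_shift_def affine_map_def)
  have at01: "b + w1 + d' + w2 = a + b * (1 + d) + w1"
    using at[of "(0, 1)"] by (auto simp: h shear_shift_def affine_map_def algebra_simps)
  have "c' = 0"
    using at00 at10 by (simp add: algebra_simps)
  moreover have "d' = a"
    using at00 at01 by (simp add: algebra_simps)
  ultimately have "a * a = 1"
    using det by simp
  then have "(a + 1) * (a + 1) = 0"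
    using char2 by (simp add: algebra_simps)
  then have "a + 1 = 0"
    by simp
  have "a = (a + 1) + 1"
    using char2 by (metis add.assoc add.right_neutral)
  also have "\<dots> = 1"
    using \<open>a + 1 = 0\<close> by simp
  finally show ?thesis
    using at00 \<open>d' = a\<close> by simp
qed

lemma kappa_ASL2_char_two:
  assumes char2: "(1::'a::{finite,field}) + 1 = 0"
  shows "card (UNIV :: 'a set) - 1 \<le> kappa (ASL2 :: ('a \<times> 'a \<Rightarrow> 'a \<times> 'a) set)"
proof -
  have self: "shear_shift c \<in> conj_class ASL2 (shear_shift c)" for c :: 'a
    unfolding conj_class_def using id_in_ASL2 by force
  have "inj_on (\<lambda>c. conj_class ASL2 (shear_shift c)) (UNIV - {0::'a})"
  proof (rule inj_onI)
    fix c d :: 'a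
    assume "conj_class ASL2 (shear_shift c) = conj_class ASL2 (shear_shift d)"
    then have "shear_shift c \<in> conj_class ASL2 (shear_shift d)"
      using self[of c] by simp
    then show "c = d"
      by (rule shear_shift_conj_eq[OF char2])
  qed
  then have "card (UNIV - {0::'a}) \<le> kappa (ASL2 :: ('a \<times> 'a \<Rightarrow> 'a \<times> 'a) set)"
    by (rule card_le_kappa)
      (auto intro: shear_shift_in_ASL2 derangement_conj_class[OF shear_shift_derangement]
            ASL2_bij)
  then show ?thesis
    by (simp add: card_Diff_singleton)
qed

theorem lemma4p7:
  fixes m :: nat
  assumes "card (UNIV :: 'a set) = 2 ^ m" and "m \<ge> 2"
  shows "kappa (ASL2 :: ('a::{finite,field} \<times> 'a \<Rightarrow> 'a \<times> 'a) set) \<ge> 3"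
proof -
  have "(1::'a) + 1 = 0"
    using char_two_of_card_power_of_two[OF assms(1)] assms(2) by simp
  then have "2 ^ m - 1 \<le> kappa (ASL2 :: ('a \<times> 'a \<Rightarrow> 'a \<times> 'a) set)"
    using kappa_ASL2_char_two assms(1) by metis
  moreover have "(2::nat) ^ 2 \<le> 2 ^ m"
    using assms(2) by (rule power_increasing) simp
  ultimately show ?thesis
    by simp
qed

end
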